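(* A real-valued $C^2$ function $u$ on a domain in $\mathscr H$ is pluriharmonic if and only if $\triangle u=0$.
   Context: $\mathscr H=\mathbb R^{4n}\times\mathbb R$ with product $(x,t)\cdot(y,s)=\big(x+y,\,t+s+2\sum_{l=1}^{2n}(x_{2l-1}y_{2l}-x_{2l}y_{2l-1})\big)$ and vector fields $X_{2l-1}=\partial_{x_{2l-1}}-2x_{2l}\partial_t$, $X_{2l}=\partial_{x_{2l}}+2x_{2l-1}\partial_t$. For $l=0,\dots,n-1$: $Z_{l0'}=X_{4l+1}+\mathbf iX_{4l+2}$, $Z_{l1'}=-X_{4l+3}-\mathbf iX_{4l+4}$, $Z_{(n+l)0'}=X_{4l+3}-\mathbf iX_{4l+4}$, $Z_{(n+l)1'}=X_{4l+1}-\mathbf iX_{4l+2}$; with a basis $\omega^0,\dots,\omega^{2n-1}$ of $\mathbb C^{2n}$, $\triangle u=\sum_{A,B}\frac12(Z_{A0'}Z_{B1'}u-Z_{B0'}Z_{A1'}u)\omega^A\wedge\omega^B$. Identify $\mathbb R^{4n}\cong\mathbb H^n$ via $q_l=x_{4l+1}+\mathbf ix_{4l+2}+\mathbf jx_{4l+3}+\mathbf kx_{4l+4}$. For $p\in\mathbb H$ let $p^{\mathbb R}$ be the real $4\times4$ matrix of left multiplication by $p$ on $\mathbb R^4\cong\mathbb H$, $J=\begin{pmatrix}0&1&0&0\\-1&0&0&0\\0&0&0&1\\0&0&-1&0\end{pmatrix}$, $B^q=\sum_l(q_l^{\mathbb R})^tJq_l^{\mathbb R}$, $\Lambda_q=|\sum_l\overline{q_l}\mathbf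 iq_l|$, $\mathfrak D=\{q\in\mathbb H^n:\Lambda_q=0\}$. On $\mathbb R^5\ni(\lambda,t)$ let $\widetilde X_j=\partial_{\lambda_j}+2\sum_{k}B^q_{kj}\lambda_k\partial_t$ and $\widetilde\triangle_q=\sum_{j=1}^4\widetilde X_j^2$. With $\iota_{\eta,q}(\lambda,t)=\eta\cdot(q\lambda,t)$, $q\lambda=(q_0\lambda,\dots,q_{n-1}\lambda)$, $u$ is pluriharmonic if $\widetilde\triangle_q(u\circ\iota_{\eta,q})=0$ (where defined) for every $\eta\in\mathscr H$ and $q\in\mathbb H^n\setminus\mathfrak D$. *)

theory Defs
  imports "HOL-Analysis.Analysis"
begin

text \<open>Quaternions are modelled as real^4 with components 0,1,2,3 standing for
the coefficients of 1, i, j, k.  The space R^{4n} = H^n is real^4^'n: the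
coordinate x_{4l+a} (a = 1..4) is x $ l $ (a-1), with l ranging over the
finite type 'n of cardinality n.\<close>

type_synonym 'n hpt = "(real^4^'n) \<times> real"

definition qmult :: "real^4 \<Rightarrow> real^4 \<Rightarrow> real^4" where
  "qmult p r = (\<chi> i.
     if i = 0 then p$0*r$0 - p$1*r$1 - p$2*r$2 - p$3*r$3
     else if i = 1 then p$0*r$1 + p$1*r$0 + p$2*r$3 - p$3*r$2
     else if i = 2 then p$0*r$2 - p$1*r$3 + p$2*r$0 + p$3*r$1
     else p$0*r$3 + p$1*r$2 - p$2*r$1 + p$3*r$0)"

definition qconj :: "real^4 \<Rightarrow> real^4" where
  "qconj p = (\<chi> i. if i = 0 then p$0 else - p$i)"

definition qi :: "real^4" where "qi = axis 1 1"

definition hmult :: "'n::finite hpt \<Rightarrow> 'n hpt \<Rightarrow> 'n hpt" where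
  "hmult p r = (fst p + fst r,
     snd p + snd r + 2 * (\<Sum>l\<in>UNIV.
        (fst p$l$0 * fst r$l$1 - fst p$l$1 * fst r$l$0)
      + (fst p$l$2 * fst r$l$3 - fst p$l$3 * fst r$l$2)))"

definition dirder :: "('a::real_normed_vector \<Rightarrow> 'b::real_normed_vector) \<Rightarrow> 'a \<Rightarrow> 'a \<Rightarrow> 'b" where
  "dirder f p v = vector_derivative (\<lambda>s. f (p + s *\<^sub>R v)) (at 0)"

text \<open>The vector field X_{4l+a+1} (a = 0..3) at the point p, as a tangent vector.\<close>
definition Xvf :: "'n::finite \<Rightarrow> 4 \<Rightarrow> 'n hpt \<Rightarrow> 'n hpt" where
  "Xvf l a p = (axis l (axis a 1),
     (if a = 0 then - 2 * fst p$l$1 else if a = 1 then 2 * fst p$l$0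
      else if a = 2 then - 2 * fst p$l$3 else 2 * fst p$l$2))"

definition Xop :: "'n::finite \<Rightarrow> 4 \<Rightarrow> ('n hpt \<Rightarrow> complex) \<Rightarrow> 'n hpt \<Rightarrow> complex" where
  "Xop l a f p = dirder f p (Xvf l a p)"

text \<open>Z_{A A'}: index A :: 'n + 'n (Inl l = l, Inr l = n+l), A' :: bool
(False = 0', True = 1').\<close>
definition Zop :: "'n::finite + 'n \<Rightarrow> bool \<Rightarrow> ('n hpt \<Rightarrow> complex) \<Rightarrow> 'n hpt \<Rightarrow> complex" where
  "Zop A s f p = (case A of
     Inl l \<Rightarrow> (if \<not> s then Xop l 0 f p + \<i> * Xop l 1 f p
               else - Xop l 2 f p - \<i> * Xop l 3 f p)
   | Inr l \<Rightarrow> (if \<not> s then Xop l 2 f p - \<i> * Xop l 3 f p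
               else Xop l 0 f p - \<i> * Xop l 1 f p))"

text \<open>The 2-form triangle u at p, represented by its values on pairs of dual
basis vectors (e_C, e_D): sum_{A,B} c_{AB} (omega^A wedge omega^B)(e_C, e_D).\<close>
definition sublap :: "('n::finite hpt \<Rightarrow> real) \<Rightarrow> 'n hpt \<Rightarrow> ('n + 'n) \<Rightarrow> ('n + 'n) \<Rightarrow> complex" where
  "sublap u p C D' = (\<Sum>A\<in>UNIV. \<Sum>B\<in>UNIV.
      (1/2) * (Zop A False (Zop B True (\<lambda>x. complex_of_real (u x))) p
             - Zop B False (Zop A True (\<lambda>x. complex_of_real (u x))) p)
      * ((if A = C \<and> B = D' then 1 else 0) - (if A = D' \<and> B = C then 1 else 0)))"

definition qR :: "real^4 \<Rightarrow> real^4^4" where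
  "qR p = (\<chi> r c. qmult p (axis c 1) $ r)"

definition Jmat :: "real^4^4" where
  "Jmat = (\<chi> r c. if r = 0 \<and> c = 1 then 1 else if r = 1 \<and> c = 0 then -1
                 else if r = 2 \<and> c = 3 then 1 else if r = 3 \<and> c = 2 then -1 else 0)"

definition Bq :: "real^4^'n::finite \<Rightarrow> real^4^4" where
  "Bq q = (\<Sum>l\<in>UNIV. transpose (qR (q$l)) ** Jmat ** qR (q$l))"

definition Lambdaq :: "real^4^'n::finite \<Rightarrow> real" where
  "Lambdaq q = norm (\<Sum>l\<in>UNIV. qmult (qconj (q$l)) (qmult qi (q$l)))"

definition degset :: "(real^4^'n::finite) set" where
  "degset = {q. Lambdaq q = 0}"

text \<open>Vector field tilde X_j on R^5 = real^4 x real (j = 1..4 is index j-1 :: 4).\<close>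
definition tXvf :: "real^4^4 \<Rightarrow> 4 \<Rightarrow> ((real^4) \<times> real) \<Rightarrow> ((real^4) \<times> real)" where
  "tXvf B j w = (axis j 1, 2 * (\<Sum>k\<in>UNIV. B$k$j * fst w$k))"

definition tX :: "real^4^4 \<Rightarrow> 4 \<Rightarrow> (((real^4) \<times> real) \<Rightarrow> real) \<Rightarrow> ((real^4) \<times> real) \<Rightarrow> real" where
  "tX B j f w = dirder f w (tXvf B j w)"

definition tLap :: "real^4^'n::finite \<Rightarrow> (((real^4) \<times> real) \<Rightarrow> real) \<Rightarrow> ((real^4) \<times> real) \<Rightarrow> real" where
  "tLap q f w = (\<Sum>j\<in>UNIV. tX (Bq q) j (tX (Bq q) j f) w)"

definition iota :: "'n::finite hpt \<Rightarrow> real^4^'n \<Rightarrow> ((real^4) \<times> real) \<Rightarrow> 'n hpt" where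
  "iota \<eta> q w = hmult \<eta> (\<chi> l. qmult (q$l) (fst w), snd w)"

definition pluriharmonic :: "'n::finite hpt set \<Rightarrow> ('n hpt \<Rightarrow> real) \<Rightarrow> bool" where
  "pluriharmonic D u \<longleftrightarrow>
     (\<forall>\<eta> q. q \<notin> degset \<longrightarrow>
        (\<forall>w. iota \<eta> q w \<in> D \<longrightarrow> tLap q (\<lambda>w'. u (iota \<eta> q w')) w = 0))"

definition C2_on :: "'a::real_normed_vector set \<Rightarrow> ('a \<Rightarrow> real) \<Rightarrow> bool" where
  "C2_on D u \<longleftrightarrow> (\<exists>u' u''.
     (\<forall>x\<in>D. (u has_derivative blinfun_apply (u' x)) (at x)) \<and>
     (\<forall>x\<in>D. (u' has_derivative blinfun_apply (u'' x)) (at x)) \<and>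
     continuous_on D u'')"

end

theory Submission
  imports Defs
begin

(*
  Let G and H be the first and second derivatives of u, and for p in D let
  K_p(v, w) = H_p(hlift p v, hlift p w) be the Hessian on horizontal lifts, a
  symmetric bilinear form on R^{4n} by the symmetry of second derivatives.

  The map iota_{eta,q} is affine and pushes the field tilde X_j forward to the
  left-invariant field with horizontal part q e_j; since the symplectic form
  omega of the group law vanishes on the diagonal, the Laplacian of
  u o iota_{eta,q} at w is sum_j K_p(q e_j, q e_j) with p = iota_{eta,q}(w).
  As iota_{p,q}(0) = p, u is pluriharmonic iff this quadratic expression in q
  vanishes for all p in D and all nondegenerate q.

  Writing K_p in 4x4 blocks B_lm, the expression equals
  sum_{l,m} sum_c (q_l conj(q_m))_c <B_lm, L_c>, where L_c is the matrix of left
  multiplication by the c-th unit quaternion.  Nondegenerate test vectors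
  supported in one or two quaternionic coordinates show that it vanishes for
  all nondegenerate q iff every pairing <B_lm, L_c> vanishes.

  On the other side, the first-order terms 2 omega(v, w) dt u in the
  coefficients of triangle u cancel by antisymmetry, and what remains are the
  combinations <B_lm, L_1> +- i <B_lm, L_i> and <B_lm, L_j> +- i <B_lm, L_k>,
  which vanish iff the same pairings do.
*)

section \<open>Quaternion arithmetic\<close>

lemma UNIV_4_0: "(UNIV::4 set) = {0, 1, 2, 3}"
proof -
  have "(4::4) = 0" by simp
  then show ?thesis using UNIV_4 by auto
qed

lemma sum_4_0: "sum f (UNIV::4 set) = f 0 + f 1 + f 2 + f 3"
  unfolding UNIV_4_0 by (simp add: ac_simps)

lemma exhaust_4_0: "(c::4) = 0 \<or> c = 1 \<or> c = 2 \<or> c = 3"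
  using UNIV_4_0 by auto

lemma axis_nth_if: "axis i x $ j = (if j = i then x else 0)"
  by (simp add: axis_def)

lemma sum_UNIV_eq_single:
  "(\<And>k. k \<noteq> l \<Longrightarrow> h k = 0) \<Longrightarrow> sum h (UNIV::'a::finite set) = h l"
  by (subst sum.mono_neutral_right[of UNIV "{l}"]) auto

lemma sum_UNIV_eq_two:
  "l \<noteq> m \<Longrightarrow> (\<And>k. k \<noteq> l \<Longrightarrow> k \<noteq> m \<Longrightarrow> h k = 0) \<Longrightarrow>
    sum h (UNIV::'a::finite set) = h l + h m"
  by (subst sum.mono_neutral_right[of UNIV "{l,m}"]) auto

lemma qmult_nth:
  "qmult p r $ 0 = p$0*r$0 - p$1*r$1 - p$2*r$2 - p$3*r$3"
  "qmult p r $ 1 = p$0*r$1 + p$1*r$0 + p$2*r$3 - p$3*r$2"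
  "qmult p r $ 2 = p$0*r$2 - p$1*r$3 + p$2*r$0 + p$3*r$1"
  "qmult p r $ 3 = p$0*r$3 + p$1*r$2 - p$2*r$1 + p$3*r$0"
  by (simp_all add: qmult_def)

lemma qconj_nth: "qconj p $ 0 = p $ 0" "qconj p $ 1 = - p $ 1" "qconj p $ 2 = - p $ 2" "qconj p $ 3 = - p $ 3"
  by (simp_all add: qconj_def)

lemma qmult_zero [simp]: "qmult 0 r = 0" "qmult p 0 = 0"
  by (simp_all add: qmult_def vec_eq_iff)

lemma qmult_add_right: "qmult p (x + y) = qmult p x + qmult p y"
  by (simp add: qmult_def vec_eq_iff algebra_simps)

lemma qmult_scaleR_right: "qmult p (c *\<^sub>R x) = c *\<^sub>R qmult p x"
  by (simp add: qmult_def vec_eq_iff algebra_simps)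

text \<open>The Frobenius pairing \<open><B, L_c>\<close> with the matrix \<open>L_c\<close> of left multiplication by the unit
  quaternion \<open>axis c 1\<close>.\<close>
definition lmult_pairing :: "4 \<Rightarrow> (4 \<Rightarrow> 4 \<Rightarrow> real) \<Rightarrow> real" where
  "lmult_pairing c B = (\<Sum>a\<in>UNIV. \<Sum>b\<in>UNIV. B a b * qmult (axis c 1) (axis b 1) $ a)"

definition lmult_trace :: "(4 \<Rightarrow> 4 \<Rightarrow> real) \<Rightarrow> real^4 \<Rightarrow> real^4 \<Rightarrow> real" where
  "lmult_trace B x y =
     (\<Sum>j\<in>UNIV. \<Sum>a\<in>UNIV. \<Sum>b\<in>UNIV. qmult x (axis j 1) $ a * qmult y (axis j 1) $ b * B a b)"

lemma lmult_trace_eq: "lmult_trace B x y = (\<Sum>c\<in>UNIV. qmult x (qconj y) $ c * lmult_pairing c B)"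
  unfolding lmult_trace_def lmult_pairing_def sum_4_0 qmult_nth qconj_nth axis_nth_if
  by simp algebra

lemma lmult_trace_zero [simp]: "lmult_trace B 0 y = 0" "lmult_trace B x 0 = 0"
  by (simp_all add: lmult_trace_def)

lemma lmult_pairing_transpose:
  "lmult_pairing c (\<lambda>a b. B b a) = (if c = 0 then 1 else -1) * lmult_pairing c B"
  using exhaust_4_0[of c] unfolding lmult_pairing_def sum_4_0 qmult_nth axis_nth_if by auto

lemma lmult_trace_one_unit:
  "lmult_trace B (axis 0 1) (s *\<^sub>R axis c 1) = s * (if c = 0 then 1 else -1) * lmult_pairing c B"
  using exhaust_4_0[of c] unfolding lmult_trace_eq sum_4_0
  by (elim disjE) (simp_all add: qmult_nth qconj_nth axis_nth_if)

lemma lmult_trace_unit_one: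
  "lmult_trace B (s *\<^sub>R axis c 1) (axis 0 1) = s * lmult_pairing c B"
  using exhaust_4_0[of c] unfolding lmult_trace_eq sum_4_0
  by (elim disjE) (simp_all add: qmult_nth qconj_nth axis_nth_if)

section \<open>Quadratic forms along quaternionic lines\<close>

definition ebasis :: "'n::finite \<Rightarrow> 4 \<Rightarrow> real^4^'n" where
  "ebasis l a = axis l (axis a 1)"

lemma ebasis_nth: "ebasis l a $ l' $ b = (if l' = l \<and> b = a then 1 else 0)"
  unfolding ebasis_def by (simp add: axis_def)

lemma vec_eq_sum_ebasis: "v = (\<Sum>l\<in>UNIV. \<Sum>a\<in>UNIV. v$l$a *\<^sub>R ebasis l a)"
proof -
  have "(\<Sum>l\<in>UNIV. \<Sum>a\<in>UNIV. v$l$a *\<^sub>R ebasis l a) $ i $ j = v $ i $ j" for i j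
    by (simp add: ebasis_nth if_distrib[of "(*) _"] cong: if_cong)
      (subst sum_UNIV_eq_single[of i]; simp)
  then show ?thesis by (simp add: vec_eq_iff)
qed

definition block :: "(real^4^'n::finite \<Rightarrow> real^4^'n \<Rightarrow> real) \<Rightarrow> 'n \<Rightarrow> 'n \<Rightarrow> 4 \<Rightarrow> 4 \<Rightarrow> real" where
  "block K l m a b = K (ebasis l a) (ebasis m b)"

lemma bilinear_eq_sum_block:
  assumes "bilinear K"
  shows "K v w = (\<Sum>l\<in>UNIV. \<Sum>m\<in>UNIV. \<Sum>a\<in>UNIV. \<Sum>b\<in>UNIV. v$l$a * w$m$b * block K l m a b)"
proof -
  have left: "linear (\<lambda>x. K x y)" and right: "linear (\<lambda>y. K x y)" for x y
    using assms unfolding bilinear_def by auto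
  have "K v w = (\<Sum>l\<in>UNIV. \<Sum>a\<in>UNIV. v$l$a * K (ebasis l a) w)"
    by (subst vec_eq_sum_ebasis[of v]) (simp add: linear_sum[OF left] linear_scale[OF left] o_def)
  also have "\<dots> = (\<Sum>l\<in>UNIV. \<Sum>a\<in>UNIV.
      v$l$a * K (ebasis l a) (\<Sum>m\<in>UNIV. \<Sum>b\<in>UNIV. w$m$b *\<^sub>R ebasis m b))"
    by (simp only: vec_eq_sum_ebasis[of w, symmetric])
  also have "\<dots> = (\<Sum>l\<in>UNIV. \<Sum>a\<in>UNIV. \<Sum>m\<in>UNIV. \<Sum>b\<in>UNIV. v$l$a * w$m$b * block K l m a b)"
    by (simp add: linear_sum[OF right] linear_scale[OF right] o_def sum_distrib_left mult.assoc block_def)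
  also have "\<dots> = (\<Sum>l\<in>UNIV. \<Sum>m\<in>UNIV. \<Sum>a\<in>UNIV. \<Sum>b\<in>UNIV. v$l$a * w$m$b * block K l m a b)"
    by (intro sum.cong refl) (rule sum.swap)
  finally show ?thesis .
qed

lemma block_swap: "(\<And>v w. K v w = K w v) \<Longrightarrow> block K m l = (\<lambda>a b. block K l m b a)"
  unfolding block_def by auto

definition qmult_vec :: "real^4^'n::finite \<Rightarrow> real^4 \<Rightarrow> real^4^'n" where
  "qmult_vec q x = (\<chi> l. qmult (q$l) x)"

lemma qmult_vec_add: "qmult_vec q (x + y) = qmult_vec q x + qmult_vec q y"
  by (simp add: qmult_vec_def vec_eq_iff qmult_add_right)

lemma qmult_vec_scaleR: "qmult_vec q (c *\<^sub>R x) = c *\<^sub>R qmult_vec q x"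
  by (simp add: qmult_vec_def vec_eq_iff qmult_scaleR_right)

lemma qmult_vec_zero [simp]: "qmult_vec q 0 = 0"
  by (simp add: qmult_vec_def vec_eq_iff)

lemma quadratic_sum_eq_lmult_trace:
  assumes "bilinear K"
  shows "(\<Sum>j\<in>UNIV. K (qmult_vec q (axis j 1)) (qmult_vec q (axis j 1)))
       = (\<Sum>l\<in>UNIV. \<Sum>m\<in>UNIV. lmult_trace (block K l m) (q$l) (q$m))"
proof -
  have "(\<Sum>j\<in>UNIV. K (qmult_vec q (axis j 1)) (qmult_vec q (axis j 1)))
      = (\<Sum>j\<in>UNIV. \<Sum>l\<in>UNIV. \<Sum>m\<in>UNIV. \<Sum>a\<in>UNIV. \<Sum>b\<in>UNIV.
          qmult (q$l) (axis j 1) $ a * qmult (q$m) (axis j 1) $ b * block K l m a b)"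
    by (subst bilinear_eq_sum_block[OF assms]) (simp add: qmult_vec_def)
  also have "\<dots> = (\<Sum>l\<in>UNIV. \<Sum>j\<in>UNIV. \<Sum>m\<in>UNIV. \<Sum>a\<in>UNIV. \<Sum>b\<in>UNIV.
          qmult (q$l) (axis j 1) $ a * qmult (q$m) (axis j 1) $ b * block K l m a b)"
    by (rule sum.swap)
  also have "\<dots> = (\<Sum>l\<in>UNIV. \<Sum>m\<in>UNIV. \<Sum>j\<in>UNIV. \<Sum>a\<in>UNIV. \<Sum>b\<in>UNIV.
          qmult (q$l) (axis j 1) $ a * qmult (q$m) (axis j 1) $ b * block K l m a b)"
    by (intro sum.cong refl) (rule sum.swap)
  finally show ?thesis unfolding lmult_trace_def .
qed

lemma quadratic_sum_single:
  assumes "bilinear K"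
  shows "(\<Sum>j\<in>UNIV. K (qmult_vec (\<chi> k. if k = l then x else 0) (axis j 1))
                          (qmult_vec (\<chi> k. if k = l then x else 0) (axis j 1)))
       = lmult_trace (block K l l) x x"
  unfolding quadratic_sum_eq_lmult_trace[OF assms]
  by (subst sum_UNIV_eq_single[of l]; simp)+

lemma quadratic_sum_pair:
  assumes "bilinear K" and "l \<noteq> m"
  shows "(\<Sum>j\<in>UNIV. K (qmult_vec (\<chi> k. if k = l then x else if k = m then y else 0) (axis j 1))
                          (qmult_vec (\<chi> k. if k = l then x else if k = m then y else 0) (axis j 1)))
     = lmult_trace (block K l l) x x + lmult_trace (block K l m) x y
     + lmult_trace (block K m l) y x + lmult_trace (block K m m) y y"
  unfolding quadratic_sum_eq_lmult_trace[OF assms(1)]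
  using \<open>l \<noteq> m\<close> by (simp add: sum_UNIV_eq_two[OF \<open>l \<noteq> m\<close>])

lemma not_in_degsetI:
  assumes "(\<Sum>k\<in>UNIV. qmult (qconj (q$k)) (qmult qi (q$k))) $ 1 \<noteq> 0"
  shows "q \<notin> degset"
proof
  assume "q \<in> degset"
  then have "(\<Sum>k\<in>UNIV. qmult (qconj (q$k)) (qmult qi (q$k))) = 0"
    unfolding degset_def Lambdaq_def by simp
  then have "(\<Sum>k\<in>UNIV. qmult (qconj (q$k)) (qmult qi (q$k))) $ 1 = 0"
    by (simp only: zero_index)
  with assms show False by contradiction
qed

lemma single_not_in_degset: "(\<chi> k. if k = l then axis 0 1 else 0) \<notin> (degset :: (real^4^'n::finite) set)"
  by (rule not_in_degsetI, subst sum_UNIV_eq_single[of l])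
    (simp_all add: qmult_nth qconj_nth qi_def axis_nth_if)

text \<open>The factor 2 matters: for \<open>c = 2, 3\<close> the summands \<open>conj(e_c) i e_c = -i\<close> and
  \<open>conj(1) i 1 = i\<close> would otherwise cancel.\<close>
lemma pair_not_in_degset:
  assumes "l \<noteq> m"
  shows "(\<chi> k. if k = l then axis 0 1 else if k = m then 2 *\<^sub>R axis c 1 else 0)
    \<notin> (degset :: (real^4^'n::finite) set)"
  by (rule not_in_degsetI, subst sum_UNIV_eq_two[OF assms])
    (use assms exhaust_4_0[of c] in \<open>auto simp: qmult_nth qconj_nth qi_def axis_nth_if\<close>)

lemma quadratic_sum_pair_unit:
  fixes K :: "real^4^'n::finite \<Rightarrow> real^4^'n \<Rightarrow> real"
  assumes "bilinear K" and sym: "\<And>v w. K v w = K w v" and "l \<noteq> m"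
    and diagonal: "\<And>k c. lmult_pairing c (block K k k) = 0"
  shows "(\<Sum>j\<in>UNIV.
            K (qmult_vec (\<chi> k. if k = l then axis 0 1 else if k = m then 2 *\<^sub>R axis c 1 else 0) (axis j 1))
              (qmult_vec (\<chi> k. if k = l then axis 0 1 else if k = m then 2 *\<^sub>R axis c 1 else 0) (axis j 1)))
       = 4 * (if c = 0 then 1 else -1) * lmult_pairing c (block K l m)"
proof -
  have "lmult_trace (block K k k) x x = 0" for k x
    using diagonal by (simp add: lmult_trace_eq)
  then show ?thesis
    using quadratic_sum_pair[OF assms(1,3), of "axis 0 1" "2 *\<^sub>R axis c 1"]
    by (simp add: lmult_trace_one_unit lmult_trace_unit_one block_swap[of K m l, OF sym]
        lmult_pairing_transpose[of c "block K l m"])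
qed

lemma quadratic_sum_vanishes_iff:
  fixes K :: "real^4^'n::finite \<Rightarrow> real^4^'n \<Rightarrow> real"
  assumes bil: "bilinear K" and sym: "\<And>v w. K v w = K w v"
  shows "(\<forall>q. q \<notin> degset \<longrightarrow> (\<Sum>j\<in>UNIV. K (qmult_vec q (axis j 1)) (qmult_vec q (axis j 1))) = 0)
     \<longleftrightarrow> (\<forall>l m c. lmult_pairing c (block K l m) = 0)"
proof
  assume "\<forall>l m c. lmult_pairing c (block K l m) = 0"
  then show "\<forall>q. q \<notin> degset \<longrightarrow> (\<Sum>j\<in>UNIV. K (qmult_vec q (axis j 1)) (qmult_vec q (axis j 1))) = 0"
    by (simp add: quadratic_sum_eq_lmult_trace[OF bil] lmult_trace_eq)
next
  assume vanish: "\<forall>q. q \<notin> degset \<longrightarrow> (\<Sum>j\<in>UNIV. K (qmult_vec q (axis j 1)) (qmult_vec q (axis j 1))) = 0"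
  have diagonal: "lmult_pairing c (block K l l) = 0" for l c
  proof (cases "c = 0")
    case True
    then show ?thesis
      using vanish single_not_in_degset[of l] quadratic_sum_single[OF bil, of l "axis 0 1"]
        lmult_trace_unit_one[of _ 1 0] by simp
  next
    case False
    then have "lmult_pairing c (block K l l) = - lmult_pairing c (block K l l)"
      using lmult_pairing_transpose[of c "block K l l"] block_swap[of K l l, OF sym] by simp
    then show ?thesis by simp
  qed
  have off_diagonal: "lmult_pairing c (block K l m) = 0" if "l \<noteq> m" for l m c
    using vanish pair_not_in_degset[OF that, of c] quadratic_sum_pair_unit[OF bil sym that diagonal, of c]
    by (cases "c = 0") simp_all
  show "\<forall>l m c. lmult_pairing c (block K l m) = 0"
    using diagonal off_diagonal by metis
qed

section \<open>The operators Z in terms of the vector fields X\<close>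

definition zcoeff :: "bool \<Rightarrow> bool \<Rightarrow> 4 \<Rightarrow> complex" where
  "zcoeff r s a =
    (if r \<and> \<not> s then (if a = 0 then 1 else if a = 1 then \<i> else 0)
     else if r \<and> s then (if a = 2 then -1 else if a = 3 then - \<i> else 0)
     else if \<not> s then (if a = 2 then 1 else if a = 3 then - \<i> else 0)
     else (if a = 0 then 1 else if a = 1 then - \<i> else 0))"

lemma Zop_eq_sum_zcoeff: "Zop A s g p = (\<Sum>a\<in>UNIV. zcoeff (isl A) s a * Xop (case_sum id id A) a g p)"
  by (cases A; cases s) (simp_all add: Zop_def sum_4_0 zcoeff_def)

definition zform :: "bool \<Rightarrow> bool \<Rightarrow> (4 \<Rightarrow> 4 \<Rightarrow> real) \<Rightarrow> complex" where
  "zform r s B =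
     (\<Sum>a\<in>UNIV. \<Sum>b\<in>UNIV. zcoeff r False a * zcoeff s True b * of_real (B a b))
   - (\<Sum>a\<in>UNIV. \<Sum>b\<in>UNIV. zcoeff s False a * zcoeff r True b * of_real (B b a))"

lemma zform_eq_lmult_pairing:
  "zform True False B = of_real (lmult_pairing 0 B) + \<i> * of_real (lmult_pairing 1 B)"
  "zform True True B = of_real (lmult_pairing 2 B) + \<i> * of_real (lmult_pairing 3 B)"
  "zform False True B = - of_real (lmult_pairing 0 B) + \<i> * of_real (lmult_pairing 1 B)"
  "zform False False B = of_real (lmult_pairing 2 B) - \<i> * of_real (lmult_pairing 3 B)"
  unfolding zform_def lmult_pairing_def sum_4_0 qmult_nth axis_nth_if zcoeff_def
  by (simp_all add: complex_eq_iff)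

lemma zform_vanish_iff: "(\<forall>r s. zform r s B = 0) \<longleftrightarrow> (\<forall>c. lmult_pairing c B = 0)"
proof
  assume "\<forall>r s. zform r s B = 0"
  then have "zform True False B = 0" "zform True True B = 0" by auto
  then have "lmult_pairing 0 B = 0" "lmult_pairing 1 B = 0" "lmult_pairing 2 B = 0" "lmult_pairing 3 B = 0"
    by (simp_all add: zform_eq_lmult_pairing complex_eq_iff)
  then show "\<forall>c. lmult_pairing c B = 0"
    by (metis exhaust_4_0)
next
  assume "\<forall>c. lmult_pairing c B = 0"
  then show "\<forall>r s. zform r s B = 0"
    by (simp add: all_bool_eq zform_eq_lmult_pairing)
qed

text \<open>Cancellation of the first-order terms of \<open>sublap\<close>, which come from the commutators of the
  fields \<open>X\<close> (see \<open>sympl_ebasis\<close>).\<close>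
lemma zcoeff_Jmat_cancel:
  "(\<Sum>a\<in>UNIV. \<Sum>b\<in>UNIV. zcoeff r False a * zcoeff s True b * of_real (Jmat$a$b))
   - (\<Sum>a\<in>UNIV. \<Sum>b\<in>UNIV. zcoeff s False a * zcoeff r True b * of_real (Jmat$a$b)) = 0"
  by (cases r; cases s) (simp_all add: sum_4_0 zcoeff_def Jmat_def)

lemma sum_sum_delta_antisym:
  fixes g :: "'a::finite \<Rightarrow> 'a \<Rightarrow> 'b::comm_ring_1"
  shows "(\<Sum>A\<in>UNIV. \<Sum>B\<in>UNIV. g A B * ((if A = C \<and> B = D then 1 else 0) - (if A = D \<and> B = C then 1 else 0)))
     = g C D - g D C"
proof -
  have nested: "(if A = C \<and> B = D then x else 0) = (if B = D then if A = C then x else 0 else 0)"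
    for A B C D and x :: 'b
    by auto
  show ?thesis
    by (simp add: right_diff_distrib sum_subtractf if_distrib[where f = "\<lambda>x. g _ _ * x"] nested
        cong: if_cong)
qed

lemma sublap_eq_Zop:
  "sublap u p C D' = Zop C False (Zop D' True (\<lambda>x. complex_of_real (u x))) p
                   - Zop D' False (Zop C True (\<lambda>x. complex_of_real (u x))) p"
  unfolding sublap_def sum_sum_delta_antisym by (simp add: algebra_simps)

section \<open>The group law and the maps iota\<close>

definition sympl :: "real^4^'n::finite \<Rightarrow> real^4^'n \<Rightarrow> real" where
  "sympl x v = (\<Sum>l\<in>UNIV. x$l$0 * v$l$1 - x$l$1 * v$l$0 + x$l$2 * v$l$3 - x$l$3 * v$l$2)"

lemma sympl_add_left: "sympl (x + y) v = sympl x v + sympl y v"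
  unfolding sympl_def by (simp add: sum.distrib[symmetric] algebra_simps)

lemma sympl_add_right: "sympl x (v + w) = sympl x v + sympl x w"
  unfolding sympl_def by (simp add: sum.distrib[symmetric] algebra_simps)

lemma sympl_scaleR_left: "sympl (c *\<^sub>R x) v = c * sympl x v"
  unfolding sympl_def by (simp add: sum_distrib_left algebra_simps)

lemma sympl_scaleR_right: "sympl x (c *\<^sub>R v) = c * sympl x v"
  unfolding sympl_def by (simp add: sum_distrib_left algebra_simps)

lemma sympl_self [simp]: "sympl v v = 0"
  unfolding sympl_def by (simp add: algebra_simps)

lemma sympl_zero_right [simp]: "sympl x 0 = 0"
  unfolding sympl_def by simp

lemma linear_sympl_left: "linear (\<lambda>x. sympl x v)"
  by (rule linearI) (simp_all add: sympl_add_left sympl_scaleR_left)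

lemma sympl_ebasis: "sympl (ebasis l a) (ebasis m b) = (if l = m then Jmat$a$b else 0)"
proof (cases "l = m")
  case True
  then show ?thesis
    unfolding sympl_def ebasis_nth
    by (subst sum_UNIV_eq_single[of l])
      (use exhaust_4_0[of a] exhaust_4_0[of b] in \<open>auto simp: Jmat_def\<close>)
next
  case False
  then show ?thesis unfolding sympl_def ebasis_nth by (auto intro!: sum.neutral)
qed

lemma hmult_eq_sympl: "hmult p r = (fst p + fst r, snd p + snd r + 2 * sympl (fst p) (fst r))"
  unfolding hmult_def sympl_def by (simp add: algebra_simps)

text \<open>The value at \<open>p\<close> of the left-invariant vector field whose value at the origin is
  \<open>(v, 0)\<close>.\<close>
definition hlift :: "'n::finite hpt \<Rightarrow> real^4^'n \<Rightarrow> 'n hpt" where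
  "hlift p v = (v, 2 * sympl (fst p) v)"

lemma hlift_add: "hlift p (v + w) = hlift p v + hlift p w"
  unfolding hlift_def by (simp add: sympl_add_right algebra_simps)

lemma hlift_scaleR: "hlift p (c *\<^sub>R v) = c *\<^sub>R hlift p v"
  unfolding hlift_def by (simp add: sympl_scaleR_right)

lemma Xvf_eq_hlift: "Xvf l a p = hlift p (ebasis l a)"
proof -
  have "sympl x (ebasis l a) = x$l$0 * (if a = 1 then 1 else 0) - x$l$1 * (if a = 0 then 1 else 0)
       + x$l$2 * (if a = 3 then 1 else 0) - x$l$3 * (if a = 2 then 1 else 0)" for x
    unfolding sympl_def ebasis_nth by (subst sum_UNIV_eq_single[of l]) auto
  then show ?thesis
    using exhaust_4_0[of a] unfolding Xvf_def hlift_def by (auto simp: ebasis_def)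
qed

definition iota_lin :: "'n::finite hpt \<Rightarrow> real^4^'n \<Rightarrow> ((real^4) \<times> real) \<Rightarrow> 'n hpt" where
  "iota_lin \<eta> q w = (qmult_vec q (fst w), snd w + 2 * sympl (fst \<eta>) (qmult_vec q (fst w)))"

lemma iota_eq: "iota \<eta> q w = \<eta> + iota_lin \<eta> q w"
  unfolding iota_def hmult_eq_sympl iota_lin_def qmult_vec_def by (simp add: prod_eq_iff)

lemma iota_zero [simp]: "iota \<eta> q 0 = \<eta>"
  unfolding iota_eq iota_lin_def by (simp add: zero_prod_def)

lemma linear_iota_lin: "linear (iota_lin \<eta> q)"
  unfolding iota_lin_def
  by (rule linearI) (simp_all add: qmult_vec_add qmult_vec_scaleR sympl_add_right sympl_scaleR_right algebra_simps)

lemma iota_has_derivative: "(iota \<eta> q has_derivative iota_lin \<eta> q) (at w)"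
proof -
  have "bounded_linear (iota_lin \<eta> q)"
    using linear_iota_lin linear_conv_bounded_linear by blast
  then have "((\<lambda>w. \<eta> + iota_lin \<eta> q w) has_derivative iota_lin \<eta> q) (at w)"
    by (auto intro!: derivative_eq_intros bounded_linear_imp_has_derivative)
  then show ?thesis unfolding iota_eq[abs_def] .
qed

lemma qR_Jmat_qR_apply:
  "(\<Sum>k\<in>UNIV. (transpose (qR p) ** Jmat ** qR p) $ k $ j * x $ k)
   = qmult p x $ 0 * qmult p (axis j 1) $ 1 - qmult p x $ 1 * qmult p (axis j 1) $ 0
   + qmult p x $ 2 * qmult p (axis j 1) $ 3 - qmult p x $ 3 * qmult p (axis j 1) $ 2"
  using exhaust_4_0[of j] unfolding matrix_matrix_mult_def transpose_def qR_def Jmat_def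
  by (elim disjE) (simp_all add: sum_4_0 qmult_nth axis_nth_if algebra_simps)

lemma Bq_eq_sympl: "(\<Sum>k\<in>UNIV. Bq q $ k $ j * x $ k) = sympl (qmult_vec q x) (qmult_vec q (axis j 1))"
proof -
  have "(\<Sum>k\<in>UNIV. Bq q $ k $ j * x $ k)
      = (\<Sum>k\<in>UNIV. \<Sum>l\<in>UNIV. (transpose (qR (q$l)) ** Jmat ** qR (q$l)) $ k $ j * x $ k)"
    unfolding Bq_def by (simp add: sum_distrib_right)
  also have "\<dots> = (\<Sum>l\<in>UNIV. \<Sum>k\<in>UNIV. (transpose (qR (q$l)) ** Jmat ** qR (q$l)) $ k $ j * x $ k)"
    by (rule sum.swap)
  also have "\<dots> = sympl (qmult_vec q x) (qmult_vec q (axis j 1))"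
    unfolding sympl_def qmult_vec_def qR_Jmat_qR_apply by simp
  finally show ?thesis .
qed

lemma iota_lin_tXvf: "iota_lin \<eta> q (tXvf (Bq q) j w) = hlift (iota \<eta> q w) (qmult_vec q (axis j 1))"
  by (simp add: iota_lin_def tXvf_def hlift_def iota_eq Bq_eq_sympl sympl_add_left)

section \<open>Symmetry of second derivatives\<close>

lemma second_difference_mvt:
  fixes f :: "'a::real_normed_vector \<Rightarrow> real" and f' :: "'a \<Rightarrow> 'a \<Rightarrow>\<^sub>L real"
  assumes "ball p r \<subseteq> S" "norm h + norm k < r"
    and deriv: "\<And>x. x \<in> S \<Longrightarrow> (f has_derivative blinfun_apply (f' x)) (at x)"
  obtains z where "0 < z" "z < 1"
    "f (p + h + k) - f (p + h) - f (p + k) + f p = f' (p + k + z *\<^sub>R h) h - f' (p + z *\<^sub>R h) h"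
proof -
  have segment: "p + t *\<^sub>R h \<in> S" "p + k + t *\<^sub>R h \<in> S" if "0 \<le> t" "t \<le> 1" for t
  proof -
    have "norm (t *\<^sub>R h) \<le> norm h" using that by (simp add: mult_left_le_one_le)
    then have "norm (t *\<^sub>R h) < r" "norm (k + t *\<^sub>R h) < r"
      using norm_triangle_ineq[of k "t *\<^sub>R h"] norm_ge_zero[of k] assms(2) by linarith+
    moreover have "p + v \<in> S" if "norm v < r" for v
      using that \<open>ball p r \<subseteq> S\<close> by (auto simp: dist_norm)
    ultimately show "p + t *\<^sub>R h \<in> S" "p + k + t *\<^sub>R h \<in> S"
      by (simp_all add: add.assoc)
  qed
  define \<phi> where "\<phi> t = f (p + k + t *\<^sub>R h) - f (p + t *\<^sub>R h)" for t
  have along: "((\<lambda>t. f (a + t *\<^sub>R h)) has_derivative (\<lambda>s. s * f' (a + t *\<^sub>R h) h)) (at t)"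
    if "a + t *\<^sub>R h \<in> S" for a t
  proof -
    have "((\<lambda>t. a + t *\<^sub>R h) has_derivative (\<lambda>s. s *\<^sub>R h)) (at t)"
      by (auto intro!: derivative_eq_intros)
    from has_derivative_compose[OF this deriv[OF that]] show ?thesis
      by (simp add: o_def blinfun.scaleR_right)
  qed
  have "DERIV \<phi> t :> f' (p + k + t *\<^sub>R h) h - f' (p + t *\<^sub>R h) h" if "0 \<le> t" "t \<le> 1" for t
    using has_derivative_diff[OF along[OF segment(2)[OF that]] along[OF segment(1)[OF that]]]
    unfolding has_field_derivative_def \<phi>_def
    by (rule has_derivative_eq_rhs) (simp add: fun_eq_iff algebra_simps)
  then obtain z where "0 < z" "z < 1" "\<phi> 1 - \<phi> 0 = f' (p + k + z *\<^sub>R h) h - f' (p + z *\<^sub>R h) h"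
    using MVT2[of 0 1 \<phi> "\<lambda>t. f' (p + k + t *\<^sub>R h) h - f' (p + t *\<^sub>R h) h"] by auto
  then show thesis using that by (simp add: \<phi>_def add_ac)
qed

lemma has_derivative_blinfun_remainder:
  fixes f' :: "'a::real_normed_vector \<Rightarrow> 'a \<Rightarrow>\<^sub>L real"
  assumes "(f' has_derivative blinfun_apply F2) (at p)" and "e > 0"
  obtains d where "d > 0"
    "\<And>y h. norm (y - p) < d \<Longrightarrow> \<bar>f' y h - f' p h - F2 (y - p) h\<bar> \<le> e * norm (y - p) * norm h"
proof -
  obtain d where "d > 0"
    and d: "\<And>y. norm (y - p) < d \<Longrightarrow> norm (f' y - f' p - F2 (y - p)) \<le> e * norm (y - p)"
    using assms unfolding has_derivative_at_alt by blast
  have "\<bar>f' y h - f' p h - F2 (y - p) h\<bar> \<le> e * norm (y - p) * norm h" if "norm (y - p) < d" for y h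
  proof -
    have "\<bar>f' y h - f' p h - F2 (y - p) h\<bar> = norm ((f' y - f' p - F2 (y - p)) h)"
      by (simp add: blinfun.diff_left)
    also have "\<dots> \<le> norm (f' y - f' p - F2 (y - p)) * norm h"
      by (rule norm_blinfun)
    also have "\<dots> \<le> e * norm (y - p) * norm h"
      using d[OF that] by (rule mult_right_mono) simp
    finally show ?thesis .
  qed
  with \<open>d > 0\<close> show thesis by (rule that)
qed

lemma second_difference_approx:
  fixes f :: "'a::real_normed_vector \<Rightarrow> real" and f' :: "'a \<Rightarrow> 'a \<Rightarrow>\<^sub>L real"
    and F2 :: "'a \<Rightarrow>\<^sub>L 'a \<Rightarrow>\<^sub>L real"
  assumes "open S" "p \<in> S"
    and deriv: "\<And>x. x \<in> S \<Longrightarrow> (f has_derivative blinfun_apply (f' x)) (at x)"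
    and deriv2: "(f' has_derivative blinfun_apply F2) (at p)"
    and "e > 0"
  obtains d where "d > 0" "\<And>h k. norm h < d \<Longrightarrow> norm k < d \<Longrightarrow>
    \<bar>f (p + h + k) - f (p + h) - f (p + k) + f p - F2 k h\<bar> \<le> 2 * e * (norm h + norm k) * norm h"
proof -
  obtain d0 where "d0 > 0" and remainder: "\<And>y h. norm (y - p) < d0 \<Longrightarrow>
      \<bar>f' y h - f' p h - F2 (y - p) h\<bar> \<le> e * norm (y - p) * norm h"
    using has_derivative_blinfun_remainder[OF deriv2 \<open>e > 0\<close>] by blast
  obtain r where "r > 0" "ball p r \<subseteq> S"
    using assms(1,2) openE by blast
  show thesis
  proof (rule that)
    show "min d0 r / 2 > 0" using \<open>d0 > 0\<close> \<open>r > 0\<close> by simp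
    fix h k :: 'a
    assume "norm h < min d0 r / 2" "norm k < min d0 r / 2"
    then have near: "norm h + norm k < d0" "norm h + norm k < r" by linarith+
    then obtain z where "0 < z" "z < 1"
      and mvt: "f (p + h + k) - f (p + h) - f (p + k) + f p = f' (p + k + z *\<^sub>R h) h - f' (p + z *\<^sub>R h) h"
      using second_difference_mvt[OF \<open>ball p r \<subseteq> S\<close> _ deriv] by blast
    have "norm (z *\<^sub>R h) \<le> norm h" using \<open>0 < z\<close> \<open>z < 1\<close> by (simp add: mult_left_le_one_le)
    then have small: "norm (z *\<^sub>R h) \<le> norm h + norm k" "norm (k + z *\<^sub>R h) \<le> norm h + norm k"
      using norm_triangle_ineq[of k "z *\<^sub>R h"] norm_ge_zero[of k] by linarith+
    have bound: "\<bar>f' y h - f' p h - F2 (y - p) h\<bar> \<le> e * (norm h + norm k) * norm h"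
      if "norm (y - p) \<le> norm h + norm k" for y
    proof -
      have "e * norm (y - p) * norm h \<le> e * (norm h + norm k) * norm h"
        using that \<open>e > 0\<close> by (intro mult_right_mono mult_left_mono) auto
      then show ?thesis using remainder[of y h] that near(1) by linarith
    qed
    have "f (p + h + k) - f (p + h) - f (p + k) + f p - F2 k h
      = (f' (p + k + z *\<^sub>R h) h - f' p h - F2 (k + z *\<^sub>R h) h)
      - (f' (p + z *\<^sub>R h) h - f' p h - F2 (z *\<^sub>R h) h)"
      unfolding mvt by (simp add: blinfun.add_left blinfun.add_right)
    then show "\<bar>f (p + h + k) - f (p + h) - f (p + k) + f p - F2 k h\<bar> \<le> 2 * e * (norm h + norm k) * norm h"
      using bound[of "p + k + z *\<^sub>R h"] bound[of "p + z *\<^sub>R h"] small by (simp add: add.assoc)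
  qed
qed

lemma second_derivative_antisym_bound:
  fixes f :: "'a::real_normed_vector \<Rightarrow> real" and f' :: "'a \<Rightarrow> 'a \<Rightarrow>\<^sub>L real"
    and F2 :: "'a \<Rightarrow>\<^sub>L 'a \<Rightarrow>\<^sub>L real"
  assumes "open S" "p \<in> S"
    and deriv: "\<And>x. x \<in> S \<Longrightarrow> (f has_derivative blinfun_apply (f' x)) (at x)"
    and deriv2: "(f' has_derivative blinfun_apply F2) (at p)"
    and "e > 0"
  shows "\<bar>F2 k h - F2 h k\<bar> \<le> 2 * e * (norm h + norm k)^2"
proof -
  obtain d where "d > 0" and approx: "\<And>h k. norm h < d \<Longrightarrow> norm k < d \<Longrightarrow>
    \<bar>f (p + h + k) - f (p + h) - f (p + k) + f p - F2 k h\<bar> \<le> 2 * e * (norm h + norm k) * norm h"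
    using second_difference_approx[OF assms] by blast
  define s where "s = d / (norm h + norm k + 1)"
  have "norm h + norm k + 1 > 0"
    using norm_ge_zero[of h] norm_ge_zero[of k] by linarith
  then have "s > 0" "s * (norm h + norm k + 1) = d"
    using \<open>d > 0\<close> by (simp_all add: s_def)
  then have "s > 0" "d = s * norm h + s * norm k + s"
    by (simp_all add: distrib_left)
  then have small: "norm (s *\<^sub>R h) < d" "norm (s *\<^sub>R k) < d"
    by (simp_all add: abs_of_pos add_nonneg_pos)
  let ?\<Delta> = "f (p + s *\<^sub>R h + s *\<^sub>R k) - f (p + s *\<^sub>R h) - f (p + s *\<^sub>R k) + f p"
  have "s * s * (F2 k h - F2 h k) = (?\<Delta> - F2 (s *\<^sub>R h) (s *\<^sub>R k)) - (?\<Delta> - F2 (s *\<^sub>R k) (s *\<^sub>R h))"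
    by (simp add: blinfun.scaleR_left blinfun.scaleR_right right_diff_distrib)
  then have "\<bar>s * s * (F2 k h - F2 h k)\<bar>
      \<le> \<bar>?\<Delta> - F2 (s *\<^sub>R h) (s *\<^sub>R k)\<bar> + \<bar>?\<Delta> - F2 (s *\<^sub>R k) (s *\<^sub>R h)\<bar>"
    by (simp only: abs_triangle_ineq4)
  also have "\<dots> \<le> 2 * e * (norm (s *\<^sub>R k) + norm (s *\<^sub>R h)) * norm (s *\<^sub>R k)
                 + 2 * e * (norm (s *\<^sub>R h) + norm (s *\<^sub>R k)) * norm (s *\<^sub>R h)"
    using approx[OF small] approx[OF small(2,1)] by (intro add_mono) (simp_all only: add_ac)
  also have "\<dots> = s * s * (2 * e * (norm h + norm k)^2)"
    using \<open>s > 0\<close> by (simp add: power2_eq_square abs_of_pos algebra_simps)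
  finally show ?thesis
    using \<open>s > 0\<close> by (simp add: abs_mult)
qed

lemma second_derivative_symmetric:
  fixes f :: "'a::real_normed_vector \<Rightarrow> real" and f' :: "'a \<Rightarrow> 'a \<Rightarrow>\<^sub>L real"
    and F2 :: "'a \<Rightarrow>\<^sub>L 'a \<Rightarrow>\<^sub>L real"
  assumes "open S" "p \<in> S"
    and deriv: "\<And>x. x \<in> S \<Longrightarrow> (f has_derivative blinfun_apply (f' x)) (at x)"
    and deriv2: "(f' has_derivative blinfun_apply F2) (at p)"
  shows "F2 h k = F2 k h"
proof -
  define C where "C = 2 * (norm h + norm k)^2 + 1"
  have "C > 0" by (simp add: C_def add_nonneg_pos)
  have "\<bar>F2 k h - F2 h k\<bar> \<le> 0 + e" if "e > 0" for e
  proof -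
    have "\<bar>F2 k h - F2 h k\<bar> \<le> 2 * (e / C) * (norm h + norm k)^2"
      using second_derivative_antisym_bound[OF assms divide_pos_pos[OF \<open>e > 0\<close> \<open>C > 0\<close>]] by simp
    also have "\<dots> \<le> e"
      using \<open>C > 0\<close> \<open>e > 0\<close> by (simp add: C_def field_simps)
    finally show ?thesis by simp
  qed
  then have "\<bar>F2 k h - F2 h k\<bar> \<le> 0"
    by (rule field_le_epsilon)
  then show ?thesis by simp
qed

section \<open>Second derivatives along horizontal vector fields\<close>

lemma dirder_eq_derivative:
  assumes "(f has_derivative f') (at p)"
  shows "dirder f p v = f' v"
proof -
  have "linear f'" using assms by (rule has_derivative_linear)
  have "((\<lambda>s. p + s *\<^sub>R v) has_derivative (\<lambda>s. s *\<^sub>R v)) (at 0)"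
    by (auto intro!: derivative_eq_intros)
  moreover have "(f has_derivative f') (at (p + 0 *\<^sub>R v))" using assms by simp
  ultimately have "((\<lambda>s. f (p + s *\<^sub>R v)) has_derivative (\<lambda>s. f' (s *\<^sub>R v))) (at 0)"
    by (rule has_derivative_compose[of "\<lambda>s. p + s *\<^sub>R v", unfolded o_def])
  then have "((\<lambda>s. f (p + s *\<^sub>R v)) has_vector_derivative f' v) (at 0)"
    unfolding has_vector_derivative_def
    by (rule has_derivative_eq_rhs) (simp add: linear_scale[OF \<open>linear f'\<close>])
  then show ?thesis unfolding dirder_def by (rule vector_derivative_at)
qed

lemma hlift_has_derivative:
  fixes v :: "real^4^'n::finite"
  shows "((\<lambda>x. hlift x v) has_derivative (\<lambda>h. (0, 2 * sympl (fst h) v))) (at x)"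
proof -
  have "linear (\<lambda>h::'n hpt. sympl (fst h) v)"
    using linear_compose[OF linear_fst linear_sympl_left[of v]] by (simp add: o_def)
  then have "bounded_linear (\<lambda>h::'n hpt. sympl (fst h) v)"
    by (simp add: linear_conv_bounded_linear)
  then show ?thesis unfolding hlift_def
    by (intro has_derivative_Pair has_derivative_const has_derivative_mult_right
        bounded_linear_imp_has_derivative)
qed

lemma has_derivative_apply_hlift:
  fixes G :: "'n::finite hpt \<Rightarrow> 'n hpt \<Rightarrow>\<^sub>L real" and H :: "'n hpt \<Rightarrow>\<^sub>L 'n hpt \<Rightarrow>\<^sub>L real"
  assumes "(G has_derivative blinfun_apply H) (at p)"
  shows "((\<lambda>x. G x (hlift x v)) has_derivative (\<lambda>h. G p (0, 2 * sympl (fst h) v) + H h (hlift p v))) (at p)"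
  using blinfun.FDERIV[OF assms hlift_has_derivative] by simp

definition hhess ::
    "('n::finite hpt \<Rightarrow> 'n hpt \<Rightarrow>\<^sub>L 'n hpt \<Rightarrow>\<^sub>L real) \<Rightarrow> 'n hpt \<Rightarrow> real^4^'n \<Rightarrow> real^4^'n \<Rightarrow> real"
  where
  "hhess H p v w = H p (hlift p v) (hlift p w)"

lemma bilinear_hhess: "bilinear (hhess H p)"
  unfolding bilinear_def hhess_def
  by (auto intro!: linearI simp: hlift_add hlift_scaleR blinfun.add_left blinfun.add_right
      blinfun.scaleR_left blinfun.scaleR_right)

context
  fixes u :: "'n::finite hpt \<Rightarrow> real" and D :: "'n hpt set"
    and G :: "'n hpt \<Rightarrow> 'n hpt \<Rightarrow>\<^sub>L real" and H :: "'n hpt \<Rightarrow> 'n hpt \<Rightarrow>\<^sub>L 'n hpt \<Rightarrow>\<^sub>L real"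
  assumes "open D"
    and deriv: "\<And>x. x \<in> D \<Longrightarrow> (u has_derivative blinfun_apply (G x)) (at x)"
    and deriv2: "\<And>x. x \<in> D \<Longrightarrow> (G has_derivative blinfun_apply (H x)) (at x)"
begin

lemma hhess_symmetric: "p \<in> D \<Longrightarrow> hhess H p v w = hhess H p w v"
  unfolding hhess_def using second_derivative_symmetric[OF \<open>open D\<close> _ deriv deriv2] by blast

lemma Xop_eq: "p \<in> D \<Longrightarrow> Xop l a (\<lambda>x. complex_of_real (u x)) p = of_real (G p (hlift p (ebasis l a)))"
  unfolding Xop_def Xvf_eq_hlift
  by (rule dirder_eq_derivative) (rule has_derivative_of_real[OF deriv])

lemma Xop_sum_Xop:
  assumes "p \<in> D"
  shows "Xop l a (\<lambda>x. \<Sum>b\<in>UNIV. c b * Xop m b (\<lambda>x. complex_of_real (u x)) x) p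
       = (\<Sum>b\<in>UNIV. c b * of_real (hhess H p (ebasis l a) (ebasis m b)
                          + 2 * sympl (ebasis l a) (ebasis m b) * G p (0, 1)))"
proof -
  have "((\<lambda>x. \<Sum>b\<in>UNIV. c b * of_real (G x (hlift x (ebasis m b)))) has_derivative
      (\<lambda>h. \<Sum>b\<in>UNIV. c b * of_real (G p (0, 2 * sympl (fst h) (ebasis m b))
                                    + H p h (hlift p (ebasis m b))))) (at p)"
    by (intro has_derivative_sum has_derivative_mult_right has_derivative_of_real
        has_derivative_apply_hlift deriv2 assms)
  then have der: "((\<lambda>x. \<Sum>b\<in>UNIV. c b * Xop m b (\<lambda>x. complex_of_real (u x)) x) has_derivative
      (\<lambda>h. \<Sum>b\<in>UNIV. c b * of_real (G p (0, 2 * sympl (fst h) (ebasis m b))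
                                    + H p h (hlift p (ebasis m b))))) (at p)"
    by (rule has_derivative_transform_within_open[OF _ \<open>open D\<close> assms]) (simp add: Xop_eq)
  have G_scale: "G p (0, 2 * sympl (ebasis l a) (ebasis m b)) = 2 * sympl (ebasis l a) (ebasis m b) * G p (0, 1)"
    for b
    using blinfun.scaleR_right[of "G p" "2 * sympl (ebasis l a) (ebasis m b)" "(0, 1)"] by simp
  show ?thesis
    unfolding Xop_def[of l a] Xvf_eq_hlift dirder_eq_derivative[OF der]
    by (simp add: G_scale hhess_def hlift_def add.commute)
qed

lemma Zop_Zop_eq:
  assumes "p \<in> D"
  shows "Zop A False (Zop B True (\<lambda>x. complex_of_real (u x))) p
     = (\<Sum>a\<in>UNIV. \<Sum>b\<in>UNIV. zcoeff (isl A) False a * zcoeff (isl B) True b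
         * of_real (hhess H p (ebasis (case_sum id id A) a) (ebasis (case_sum id id B) b)
                    + 2 * sympl (ebasis (case_sum id id A) a) (ebasis (case_sum id id B) b) * G p (0, 1)))"
proof -
  have "Zop B True (\<lambda>x. complex_of_real (u x))
      = (\<lambda>x. \<Sum>b\<in>UNIV. zcoeff (isl B) True b * Xop (case_sum id id B) b (\<lambda>x. complex_of_real (u x)) x)"
    by (rule ext) (rule Zop_eq_sum_zcoeff)
  then show ?thesis
    by (simp add: Zop_eq_sum_zcoeff[of A] Xop_sum_Xop[OF assms] sum_distrib_left mult.assoc)
qed

lemma sublap_eq_zform:
  assumes "p \<in> D"
  shows "sublap u p C D' = zform (isl C) (isl D') (block (hhess H p) (case_sum id id C) (case_sum id id D'))"
proof -
  define hess_part where "hess_part A B = (\<Sum>a\<in>UNIV. \<Sum>b\<in>UNIV. zcoeff (isl A) False a * zcoeff (isl B) True b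
      * of_real (hhess H p (ebasis (case_sum id id A) a) (ebasis (case_sum id id B) b)))" for A B :: "'n + 'n"
  define comm_part where "comm_part A B = (\<Sum>a\<in>UNIV. \<Sum>b\<in>UNIV. zcoeff (isl A) False a * zcoeff (isl B) True b
      * of_real (sympl (ebasis (case_sum id id A) a) (ebasis (case_sum id id B) b)))" for A B :: "'n + 'n"
  have "Zop A False (Zop B True (\<lambda>x. complex_of_real (u x))) p
      = hess_part A B + of_real (2 * G p (0, 1)) * comm_part A B"
    for A B
    unfolding Zop_Zop_eq[OF assms] hess_part_def comm_part_def
    by (simp add: ring_distribs sum.distrib sum_distrib_left mult_ac)
  then have "sublap u p C D'
      = (hess_part C D' - hess_part D' C) + of_real (2 * G p (0, 1)) * (comm_part C D' - comm_part D' C)"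
    unfolding sublap_eq_Zop by (simp add: algebra_simps)
  moreover have "hess_part C D' - hess_part D' C
      = zform (isl C) (isl D') (block (hhess H p) (case_sum id id C) (case_sum id id D'))"
    unfolding hess_part_def zform_def block_def using hhess_symmetric[OF assms] by simp
  moreover have "comm_part C D' - comm_part D' C = 0"
    using zcoeff_Jmat_cancel[of "isl C" "isl D'"]
    by (cases "case_sum id id C = case_sum id id D'") (simp_all add: comm_part_def sympl_ebasis)
  ultimately show ?thesis by simp
qed

lemma sublap_zero_iff:
  assumes "p \<in> D"
  shows "sublap u p = (\<lambda>C D'. 0) \<longleftrightarrow> (\<forall>l m c. lmult_pairing c (block (hhess H p) l m) = 0)"
proof -
  have "sublap u p = (\<lambda>C D'. 0) \<longleftrightarrow> (\<forall>r s l m. zform r s (block (hhess H p) l m) = 0)"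
  proof
    assume "sublap u p = (\<lambda>C D'. 0)"
    then have zero: "zform (isl C) (isl D') (block (hhess H p) (case_sum id id C) (case_sum id id D')) = 0" for C D'
      using sublap_eq_zform[OF assms, of C D'] by simp
    show "\<forall>r s l m. zform r s (block (hhess H p) l m) = 0"
    proof (intro allI)
      fix r s l m
      show "zform r s (block (hhess H p) l m) = 0"
        using zero[of "if r then Inl l else Inr l" "if s then Inl m else Inr m"] by (cases r; cases s) simp_all
    qed
  qed (simp add: fun_eq_iff sublap_eq_zform[OF assms])
  then show ?thesis
    using zform_vanish_iff by blast
qed

lemma tX_iota:
  assumes "iota \<eta> q w \<in> D"
  shows "tX (Bq q) j (\<lambda>w. u (iota \<eta> q w)) w = G (iota \<eta> q w) (hlift (iota \<eta> q w) (qmult_vec q (axis j 1)))"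
proof -
  have "((\<lambda>w. u (iota \<eta> q w)) has_derivative (\<lambda>h. G (iota \<eta> q w) (iota_lin \<eta> q h))) (at w)"
    using has_derivative_compose[OF iota_has_derivative deriv[OF assms]] by (simp add: o_def)
  then show ?thesis
    unfolding tX_def by (simp add: dirder_eq_derivative iota_lin_tXvf)
qed

lemma tX_tX_iota:
  assumes "iota \<eta> q w \<in> D"
  shows "tX (Bq q) j (tX (Bq q) j (\<lambda>w. u (iota \<eta> q w))) w
       = hhess H (iota \<eta> q w) (qmult_vec q (axis j 1)) (qmult_vec q (axis j 1))"
proof -
  let ?p = "iota \<eta> q w" and ?V = "qmult_vec q (axis j 1)"
  let ?U = "iota \<eta> q -` D"
  have "open ?U"
    by (rule continuous_open_vimage[OF \<open>open D\<close>]) (rule has_derivative_continuous[OF iota_has_derivative])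
  have "((\<lambda>w'. G (iota \<eta> q w') (hlift (iota \<eta> q w') ?V)) has_derivative
     (\<lambda>h. G ?p (0, 2 * sympl (fst h) ?V) + H ?p h (hlift ?p ?V)) \<circ> iota_lin \<eta> q) (at w)"
    using has_derivative_compose[OF iota_has_derivative has_derivative_apply_hlift[OF deriv2[OF assms]]]
    by (simp add: o_def)
  then have der: "(tX (Bq q) j (\<lambda>w. u (iota \<eta> q w)) has_derivative
     (\<lambda>h. G ?p (0, 2 * sympl (fst h) ?V) + H ?p h (hlift ?p ?V)) \<circ> iota_lin \<eta> q) (at w)"
    by (rule has_derivative_transform_within_open[OF _ \<open>open ?U\<close>]) (use assms in \<open>simp_all add: tX_iota\<close>)
  show ?thesis
    unfolding tX_def[of _ _ "tX (Bq q) j _"] dirder_eq_derivative[OF der]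
    by (simp add: iota_lin_tXvf hlift_def hhess_def zero_prod_def[symmetric])
qed

lemma pluriharmonic_iff_hhess:
  "pluriharmonic D u \<longleftrightarrow>
     (\<forall>p\<in>D. \<forall>q. q \<notin> degset \<longrightarrow>
        (\<Sum>j\<in>UNIV. hhess H p (qmult_vec q (axis j 1)) (qmult_vec q (axis j 1))) = 0)"
proof -
  have tLap_iota: "tLap q (\<lambda>w. u (iota \<eta> q w)) w
      = (\<Sum>j\<in>UNIV. hhess H (iota \<eta> q w) (qmult_vec q (axis j 1)) (qmult_vec q (axis j 1)))"
    if "iota \<eta> q w \<in> D" for \<eta> and q :: "real^4^'n" and w
    unfolding tLap_def using tX_tX_iota[OF that] by simp
  show ?thesis
    unfolding pluriharmonic_def
  proof (intro iffI ballI allI impI)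
    fix p and q :: "real^4^'n"
    assume harmonic: "\<forall>\<eta> q. q \<notin> degset \<longrightarrow>
        (\<forall>w. iota \<eta> q w \<in> D \<longrightarrow> tLap q (\<lambda>w'. u (iota \<eta> q w')) w = 0)"
      and "p \<in> D" "q \<notin> degset"
    then have "tLap q (\<lambda>w'. u (iota p q w')) 0 = 0"
      using harmonic[rule_format, where \<eta> = p and q = q and w = 0] by simp
    then show "(\<Sum>j\<in>UNIV. hhess H p (qmult_vec q (axis j 1)) (qmult_vec q (axis j 1))) = 0"
      using tLap_iota[of p q 0] \<open>p \<in> D\<close> by simp
  next
    fix \<eta> q w
    assume "\<forall>p\<in>D. \<forall>q. q \<notin> degset \<longrightarrow>
        (\<Sum>j\<in>UNIV. hhess H p (qmult_vec q (axis j 1)) (qmult_vec q (axis j 1))) = 0"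
      and "q \<notin> degset" "iota \<eta> q w \<in> D"
    then show "tLap q (\<lambda>w'. u (iota \<eta> q w')) w = 0"
      by (simp add: tLap_iota)
  qed
qed

end

theorem corollary4p2:
  fixes u :: "'n::finite hpt \<Rightarrow> real" and D :: "'n hpt set"
  assumes "open D" and "connected D" and "C2_on D u"
  shows "pluriharmonic D u \<longleftrightarrow> (\<forall>p\<in>D. sublap u p = (\<lambda>C D'. 0))"
proof -
  obtain G H where
    deriv: "\<forall>x\<in>D. (u has_derivative blinfun_apply (G x)) (at x)" and
    deriv2: "\<forall>x\<in>D. (G has_derivative blinfun_apply (H x)) (at x)"
    using \<open>C2_on D u\<close> unfolding C2_on_def by blast
  note C2 = \<open>open D\<close> deriv[rule_format] deriv2[rule_format]
  have "pluriharmonic D u \<longleftrightarrow>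
      (\<forall>p\<in>D. \<forall>q. q \<notin> degset \<longrightarrow>
         (\<Sum>j\<in>UNIV. hhess H p (qmult_vec q (axis j 1)) (qmult_vec q (axis j 1))) = 0)"
    by (rule pluriharmonic_iff_hhess[OF C2])
  also have "\<dots> \<longleftrightarrow> (\<forall>p\<in>D. \<forall>l m c. lmult_pairing c (block (hhess H p) l m) = 0)"
    using quadratic_sum_vanishes_iff[OF bilinear_hhess hhess_symmetric[OF C2]] by simp
  also have "\<dots> \<longleftrightarrow> (\<forall>p\<in>D. sublap u p = (\<lambda>C D'. 0))"
    using sublap_zero_iff[OF C2] by blast
  finally show ?thesis .
qed

end
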